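(* Let $0<p<1$, $q=0$, $0<\theta<1$ and $\varepsilon>0$. Let \[ m_{\mathrm{COMP},\mathrm{rev}Z}=\frac{1}{1-\theta}\min_{d>0}\left\{\frac{1}{-d\log\big(1-e^{-d}(1-p)\big)}\right\}k\log(n/k). \] If $m>(1+\varepsilon)m_{\mathrm{COMP},\mathrm{rev}Z}$, then (with parameters chosen suitably) noisy COMP recovers $\sigma$ with high probability given $G$ and $\hat\sigma$.
   Context: Noisy group testing model (reverse Z channel): $n$ individuals, $k\sim n^{\theta}$ infected; $\sigma\in\{0,1\}^n$ uniformly random of Hamming weight $k$. Constant-column design $G$: $m=ck\log(n/k)$ tests, each individual independently assigned to exactly $\Delta=cd\log(n/k)$ distinct tests chosen uniformly at random. A test is truly positive iff it contains an infected individual. Displayed results $\hat\sigma$: independently, a truly negative test is displayed positive with probability $p$, a truly positive test is displayed negative with probability $q$ (here $q=0$). Noisy COMP with threshold $\alpha$: declare healthy every individual appearing in at least $\alpha\Delta$ displayed negative tests, the rest infected. $\log$ natural. "With high probability": probability $\to1$ as $n\to\infty$. *)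

theory Defs
  imports "HOL-Probability.Probability" "HOL-Probability.Product_PMF"
begin

text \<open>The infection vector sigma is represented by its support S (the set of infected
  individuals), uniformly random among the k-subsets of {0..<n}.
  A design G maps each individual to the set of (distinct) tests it joins.\<close>

definition infected_sets :: "nat \<Rightarrow> nat \<Rightarrow> nat set set" where
  "infected_sets n k = {S. S \<subseteq> {0..<n} \<and> card S = k}"

definition constant_column_design :: "nat \<Rightarrow> nat \<Rightarrow> nat \<Rightarrow> (nat \<Rightarrow> nat set) pmf" where
  "constant_column_design n m Delta =
     Pi_pmf {0..<n} {} (\<lambda>i. pmf_of_set {T. T \<subseteq> {0..<m} \<and> card T = Delta})"

definition truly_positive :: "nat set \<Rightarrow> (nat \<Rightarrow> nat set) \<Rightarrow> nat \<Rightarrow> bool" where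
  "truly_positive S G a = (\<exists>i\<in>S. a \<in> G i)"

text \<open>Displayed results (True = displayed positive): independently, a truly negative
  test is displayed positive with probability p, a truly positive test is displayed
  negative with probability q.\<close>
definition displayed_results ::
  "nat \<Rightarrow> real \<Rightarrow> real \<Rightarrow> nat set \<Rightarrow> (nat \<Rightarrow> nat set) \<Rightarrow> (nat \<Rightarrow> bool) pmf" where
  "displayed_results m p q S G =
     Pi_pmf {0..<m} False
       (\<lambda>a. if truly_positive S G a then bernoulli_pmf (1 - q) else bernoulli_pmf p)"

definition noisy_COMP ::
  "nat \<Rightarrow> nat \<Rightarrow> real \<Rightarrow> (nat \<Rightarrow> nat set) \<Rightarrow> (nat \<Rightarrow> bool) \<Rightarrow> nat set" where
  "noisy_COMP n Delta alpha G D =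
     {i \<in> {0..<n}. \<not> (real (card {a \<in> G i. \<not> D a}) \<ge> alpha * real Delta)}"

definition COMP_success_prob ::
  "nat \<Rightarrow> nat \<Rightarrow> nat \<Rightarrow> nat \<Rightarrow> real \<Rightarrow> real \<Rightarrow> real \<Rightarrow> real" where
  "COMP_success_prob n k m Delta p q alpha =
     measure_pmf.prob
       (do { S \<leftarrow> pmf_of_set (infected_sets n k);
             G \<leftarrow> constant_column_design n m Delta;
             D \<leftarrow> displayed_results m p q S G;
             return_pmf (noisy_COMP n Delta alpha G D = S) })
       {True}"

end

theory Submission
  imports Defs
begin

text \<open>
  Since \<open>q = 0\<close>, every test of an infected individual is displayed positive, so noisy COMP
  can only fail by declaring some healthy individual \<open>i\<close> infected, which needs fewer than
  \<open>\<alpha>\<Delta>\<close> displayed negative tests of \<open>i\<close>. An exponential Markov bound with base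
  \<open>\<mu> < 1\<close> and a union bound over \<open>i\<close> bound the failure probability by
  \<open>n \<mu>^(-\<alpha>\<Delta>) E[(p + (1 - p) \<mu>)^N]\<close>, where \<open>N\<close> counts the tests of \<open>i\<close> that contain
  no infected individual. The tests of one individual form a uniformly random \<open>\<Delta>\<close>-subset,
  whose inclusion events are negatively correlated; this gives
  \<open>E[g^N] \<le> (1 - (1 - g) (1 - \<Delta>/m)^k)^\<Delta>\<close>. With \<open>\<mu> = \<delta>\<close>, \<open>\<alpha> = \<delta> / -ln \<delta>\<close>,
  \<open>\<Delta> \<sim> c d ln(n/k)\<close>, \<open>m \<sim> c k ln(n/k)\<close>, \<open>(1 - \<Delta>/m)^k \<rightarrow> exp(-d)\<close> and
  \<open>ln(n/k) \<sim> (1 - \<theta>) ln n\<close>, the bound is \<open>n^(1 - c d (1 - \<theta>) B + o(1))\<close> with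
  \<open>B = -ln(1 - (1 - p) (1 - \<delta>) exp(-d)) - \<delta>\<close>. The hypothesis on \<open>c\<close> yields a \<open>d\<close>, and
  continuity at \<open>\<delta> = 0\<close> a \<open>\<delta>\<close>, with \<open>c d (1 - \<theta>) B > 1\<close>.
\<close>

section \<open>Uniformly random subsets\<close>

abbreviation subsets_of_card :: "'a set \<Rightarrow> nat \<Rightarrow> 'a set set" where
  "subsets_of_card A D \<equiv> {T. T \<subseteq> A \<and> card T = D}"

lemma finite_subsets_of_card: "finite A \<Longrightarrow> finite (subsets_of_card A D)"
  by (rule finite_subset[of _ "Pow A"]) auto

lemma subsets_of_card_nonempty:
  assumes "finite A" "D \<le> card A"
  shows "subsets_of_card A D \<noteq> {}"
proof -
  have "card (subsets_of_card A D) \<noteq> 0"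
    using assms by (simp add: n_subsets)
  then show ?thesis by (metis card.empty)
qed

lemma set_pmf_uniform_subset:
  "finite A \<Longrightarrow> D \<le> card A \<Longrightarrow> set_pmf (pmf_of_set (subsets_of_card A D)) = subsets_of_card A D"
  by (intro set_pmf_of_set finite_subsets_of_card subsets_of_card_nonempty)

lemma card_supersets_of_card:
  assumes "finite A" "C \<subseteq> A" "card C \<le> D"
  shows "card {T \<in> subsets_of_card A D. C \<subseteq> T} = (card A - card C) choose (D - card C)"
proof -
  have fin: "finite C" "finite (A - C)" using assms(1,2) finite_subset by auto
  have "{T \<in> subsets_of_card A D. C \<subseteq> T} = (\<lambda>H. H \<union> C) ` subsets_of_card (A - C) (D - card C)"
  proof (intro equalityI subsetI)
    fix T assume T: "T \<in> {T \<in> subsets_of_card A D. C \<subseteq> T}"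
    then have "card (T - C) = D - card C" using fin by (auto simp: card_Diff_subset)
    with T show "T \<in> (\<lambda>H. H \<union> C) ` subsets_of_card (A - C) (D - card C)"
      by (intro image_eqI[of _ _ "T - C"]) auto
  next
    fix T assume "T \<in> (\<lambda>H. H \<union> C) ` subsets_of_card (A - C) (D - card C)"
    then obtain H where H: "H \<subseteq> A - C" "card H = D - card C" and T: "T = H \<union> C" by auto
    have "card T = D"
      using H assms(3) fin unfolding T by (subst card_Un_disjoint) (auto intro: finite_subset)
    then show "T \<in> {T \<in> subsets_of_card A D. C \<subseteq> T}" using H assms(2) T by auto
  qed
  also have "card \<dots> = card (subsets_of_card (A - C) (D - card C))"
    by (intro card_image inj_onI) blast
  also have "\<dots> = (card A - card C) choose (D - card C)"
    using fin assms(2) by (simp add: n_subsets card_Diff_subset)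
  finally show ?thesis .
qed

lemma binomial_diff_le:
  assumes "c \<le> D" "D \<le> m"
  shows "real ((m - c) choose (D - c)) \<le> real (m choose D) * (real D / real m) ^ c"
  using assms(1)
proof (induction c)
  case (Suc c)
  define a where "a = m - c"
  define b where "b = D - c"
  have b: "0 < b" "b \<le> a" using Suc.prems assms(2) by (auto simp: a_def b_def)
  have pos: "0 < real a" "0 < real m" using b Suc.prems assms(2) by auto
  have absorb: "real b * real (a choose b) = real a * real ((a - 1) choose (b - 1))"
    using arg_cong[OF times_binomial_minus1_eq[OF b(1), of a], of real] by simp
  have ratio: "real b / real a \<le> real D / real m"
  proof -
    have "real D * real c \<le> real m * real c"
      using assms(2) by (intro mult_right_mono) auto
    then have "real b * real m \<le> real D * real a"
      using Suc.prems assms(2) by (simp add: a_def b_def of_nat_diff algebra_simps)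
    then show ?thesis
      using pos by (simp add: pos_divide_le_eq pos_le_divide_eq)
  qed
  have "m - Suc c = a - 1" "D - Suc c = b - 1"
    unfolding a_def b_def by arith+
  then have "real ((m - Suc c) choose (D - Suc c)) = real ((a - 1) choose (b - 1))"
    by simp
  also have "\<dots> = real (a choose b) * (real b / real a)"
    using absorb pos by (simp add: field_simps)
  also have "\<dots> \<le> real (m choose D) * (real D / real m) ^ c * (real D / real m)"
    using Suc ratio by (intro mult_mono) (auto simp: a_def b_def)
  finally show ?case by (simp add: ac_simps)
qed simp

lemma prob_uniform_subset_contains:
  assumes "finite A" "D \<le> card A"
  shows "measure_pmf.prob (pmf_of_set (subsets_of_card A D)) {T. C \<subseteq> T}
           \<le> (real D / real (card A)) ^ card C"
proof -
  have prob_eq: "measure_pmf.prob (pmf_of_set (subsets_of_card A D)) {T. C \<subseteq> T}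
      = real (card {T \<in> subsets_of_card A D. C \<subseteq> T}) / real (card A choose D)"
  proof -
    have "subsets_of_card A D \<inter> {T. C \<subseteq> T} = {T \<in> subsets_of_card A D. C \<subseteq> T}"
      by blast
    then show ?thesis
      using measure_pmf_of_set[OF subsets_of_card_nonempty[OF assms] finite_subsets_of_card[OF assms(1)]]
      by (simp add: n_subsets[OF assms(1)])
  qed
  show ?thesis
  proof (cases "C \<subseteq> A \<and> card C \<le> D")
    case True
    have "real ((card A - card C) choose (D - card C)) / real (card A choose D)
        \<le> (real D / real (card A)) ^ card C"
      using binomial_diff_le[of "card C" D "card A"] True assms(2)
      by (simp add: divide_le_eq mult.commute)
    then show ?thesis
      using True assms(1) card_supersets_of_card[of A C D] by (simp add: prob_eq)
  next
    case False
    have none: "{T \<in> subsets_of_card A D. C \<subseteq> T} = {}"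
      using False assms(1) by (auto intro: card_mono finite_subset)
    show ?thesis unfolding prob_eq none by simp
  qed
qed

lemma pow_card_diff_eq_prod:
  fixes g :: "'b::comm_monoid_mult"
  assumes "finite B"
  shows "g ^ card (B - T) = (\<Prod>x\<in>B. if x \<in> T then 1 else g)"
  using assms by (simp add: prod.If_cases Diff_eq)

lemma expectation_uniform_subset_pow_card_diff:
  fixes g :: real
  assumes "finite A" "D \<le> card A" "0 \<le> g" "g \<le> 1" "finite B"
  shows "measure_pmf.expectation (pmf_of_set (subsets_of_card A D)) (\<lambda>T. g ^ card (B - T))
           \<le> (g + (1 - g) * (real D / real (card A))) ^ card B"
proof -
  let ?U = "pmf_of_set (subsets_of_card A D)"
  let ?r = "real D / real (card A)"
  let ?w = "\<lambda>X. (1 - g) ^ card X * g ^ card (B - X)"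
  have fin_U: "finite (set_pmf ?U)"
    using assms(1,2) by (simp add: set_pmf_uniform_subset finite_subsets_of_card)
  \<comment> \<open>Expanding \<open>\<Prod>x\<in>B. g + (1 - g) [x \<in> T]\<close> reduces the claim to the bound on
      \<open>P(X \<subseteq> T)\<close>, i.e. to the negative correlation of the events \<open>x \<in> T\<close>.\<close>
  have expand: "g ^ card (B - T) = (\<Sum>X\<in>Pow B. ?w X * indicator {T. X \<subseteq> T} T)" for T
  proof -
    have "g ^ card (B - T) = (\<Prod>x\<in>B. (1 - g) * indicator {T. x \<in> T} T + g)"
      using assms(5) by (auto simp: pow_card_diff_eq_prod intro!: prod.cong)
    also have "\<dots> = (\<Sum>X\<in>Pow B. (\<Prod>x\<in>X. (1 - g) * indicator {T. x \<in> T} T) * (\<Prod>x\<in>B - X. g))"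
      by (rule prod_add[OF assms(5)])
    also have "\<dots> = (\<Sum>X\<in>Pow B. ?w X * indicator {T. X \<subseteq> T} T)"
    proof (intro sum.cong refl)
      fix X assume "X \<in> Pow B"
      then have "finite X" using assms(5) finite_subset by auto
      moreover from this have "(\<Prod>x\<in>X. indicator {T. x \<in> T} T :: real) = indicator {T. X \<subseteq> T} T"
        by (cases "X \<subseteq> T") (auto simp: indicator_def subset_iff prod_zero_iff)
      ultimately show "(\<Prod>x\<in>X. (1 - g) * indicator {T. x \<in> T} T) * (\<Prod>x\<in>B - X. g)
          = ?w X * indicator {T. X \<subseteq> T} T"
        by (simp add: prod.distrib)
    qed
    finally show ?thesis .
  qed
  have "measure_pmf.expectation ?U (\<lambda>T. g ^ card (B - T))
      = measure_pmf.expectation ?U (\<lambda>T. \<Sum>X\<in>Pow B. ?w X * indicator {T. X \<subseteq> T} T)"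
    by (rule Bochner_Integration.integral_cong[OF refl expand])
  also have "\<dots> = (\<Sum>X\<in>Pow B. ?w X * measure_pmf.prob ?U {T. X \<subseteq> T})"
    by (subst Bochner_Integration.integral_sum) (auto simp: integrable_measure_pmf_finite fin_U)
  also have "\<dots> \<le> (\<Sum>X\<in>Pow B. ?w X * ?r ^ card X)"
    using assms
    by (intro sum_mono mult_left_mono prob_uniform_subset_contains mult_nonneg_nonneg zero_le_power)
       auto
  also have "\<dots> = (\<Sum>X\<in>Pow B. (\<Prod>x\<in>X. (1 - g) * ?r) * (\<Prod>x\<in>B - X. g))"
    by (simp only: prod_constant power_mult_distrib mult_ac)
  also have "\<dots> = (\<Prod>x\<in>B. (1 - g) * ?r + g)"
    by (rule prod_add[OF assms(5), symmetric])
  also have "\<dots> = (g + (1 - g) * ?r) ^ card B"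
    by (simp add: add.commute)
  finally show ?thesis .
qed

section \<open>The constant-column design\<close>

lemma expectation_bind_pmf:
  fixes f :: "'b \<Rightarrow> real"
  assumes "\<And>y. \<bar>f y\<bar> \<le> K"
  shows "measure_pmf.expectation (bind_pmf M N) f
           = measure_pmf.expectation M (\<lambda>x. measure_pmf.expectation (N x) f)"
  unfolding measure_pmf_bind
  by (rule integral_bind[where K = "count_space UNIV" and B = K and B' = 1])
     (auto simp: assms measure_pmf_in_subprob_algebra)

lemma expectation_Pi_pmf_insert:
  fixes f :: "('a \<Rightarrow> 'b) \<Rightarrow> real"
  assumes "finite A" "x \<notin> A" "\<And>G. \<bar>f G\<bar> \<le> K"
  shows "measure_pmf.expectation (Pi_pmf (insert x A) dflt P) f
           = measure_pmf.expectation (P x)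
               (\<lambda>y. measure_pmf.expectation (Pi_pmf A dflt P) (\<lambda>G. f (G(x := y))))"
  unfolding Pi_pmf_insert'[OF assms(1,2)]
  by (simp add: expectation_bind_pmf[where K = K] assms)

lemma expectation_Pi_pmf_subset:
  fixes f :: "('a \<Rightarrow> 'b) \<Rightarrow> real"
  assumes "finite A" "A' \<subseteq> A" "\<And>G G'. (\<And>x. x \<in> A' \<Longrightarrow> G x = G' x) \<Longrightarrow> f G = f G'"
  shows "measure_pmf.expectation (Pi_pmf A dflt P) f = measure_pmf.expectation (Pi_pmf A' dflt P) f"
proof -
  have "measure_pmf.expectation (Pi_pmf A' dflt P) f
      = measure_pmf.expectation (Pi_pmf A dflt P) (\<lambda>G. f (\<lambda>x. if x \<in> A' then G x else dflt))"
    by (simp add: Pi_pmf_subset[OF assms(1,2)])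
  also have "\<dots> = measure_pmf.expectation (Pi_pmf A dflt P) f"
    by (intro Bochner_Integration.integral_cong refl assms(3)) simp
  finally show ?thesis ..
qed

lemma expectation_Pi_uniform_subsets_pow_card_diff_Union:
  fixes g :: real
  assumes "finite A" "D \<le> card A" "0 \<le> g" "g \<le> 1" "finite S" "finite B"
  shows "measure_pmf.expectation (Pi_pmf S dflt (\<lambda>_. pmf_of_set (subsets_of_card A D)))
             (\<lambda>G. g ^ card (B - \<Union>(G ` S)))
           \<le> (1 - (1 - g) * (1 - real D / real (card A)) ^ card S) ^ card B"
  using assms(5,6)
proof (induction S arbitrary: B rule: finite_induct)
  case (insert j S)
  let ?U = "pmf_of_set (subsets_of_card A D)"
  let ?r = "real D / real (card A)"
  define g' where "g' = 1 - (1 - g) * (1 - ?r) ^ card S"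
  have r: "0 \<le> ?r" "?r \<le> 1" using assms(2) by (auto simp: divide_le_eq_1)
  have "0 \<le> (1 - ?r) ^ card S" "(1 - ?r) ^ card S \<le> 1"
    using r by (auto intro: power_le_one)
  then have "0 \<le> (1 - g) * (1 - ?r) ^ card S" "(1 - g) * (1 - ?r) ^ card S \<le> 1"
    using assms(3,4) by (auto intro: mult_le_one)
  then have g': "0 \<le> g'" "g' \<le> 1" by (auto simp: g'_def)
  have bounded: "\<bar>g ^ n\<bar> \<le> 1" for n using assms(3,4) by (simp add: power_le_one)
  have fin_U: "finite (set_pmf ?U)"
    using assms(1,2) by (simp add: set_pmf_uniform_subset finite_subsets_of_card)
  have "measure_pmf.expectation (Pi_pmf (insert j S) dflt (\<lambda>_. ?U)) (\<lambda>G. g ^ card (B - \<Union>(G ` insert j S)))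
      = measure_pmf.expectation ?U
          (\<lambda>y. measure_pmf.expectation (Pi_pmf S dflt (\<lambda>_. ?U)) (\<lambda>G. g ^ card ((B - y) - \<Union>(G ` S))))"
  proof -
    have "B - \<Union>((G(j := y)) ` insert j S) = (B - y) - \<Union>(G ` S)" for G :: "'b \<Rightarrow> 'a set" and y
      using insert.hyps(2) by (auto split: if_splits)
    then show ?thesis
      by (subst expectation_Pi_pmf_insert[OF insert.hyps bounded]) (simp only:)
  qed
  also have "\<dots> \<le> measure_pmf.expectation ?U (\<lambda>y. g' ^ card (B - y))"
    unfolding g'_def using insert.prems
    by (intro integral_mono insert.IH) (auto simp: integrable_measure_pmf_finite fin_U)
  also have "\<dots> \<le> (g' + (1 - g') * ?r) ^ card B"
    by (rule expectation_uniform_subset_pow_card_diff) (use assms g' insert.prems in auto)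
  also have "g' + (1 - g') * ?r = 1 - (1 - g) * (1 - ?r) * (1 - ?r) ^ card S"
  proof -
    have "(1 - (1 - g) * x) + (1 - (1 - (1 - g) * x)) * r = 1 - (1 - g) * (1 - r) * x" for x r :: real
      by (simp add: algebra_simps)
    then show ?thesis unfolding g'_def .
  qed
  also have "\<dots> = 1 - (1 - g) * (1 - ?r) ^ card (insert j S)"
    using insert.hyps by simp
  finally show ?case .
qed simp

lemma expectation_Pi_uniform_subsets_pow_card_component_diff_Union:
  fixes g :: real
  assumes "finite A" "D \<le> card A" "0 \<le> g" "g \<le> 1"
    and "finite I" "i \<in> I" "S \<subseteq> I" "i \<notin> S"
  shows "measure_pmf.expectation (Pi_pmf I dflt (\<lambda>_. pmf_of_set (subsets_of_card A D)))
             (\<lambda>G. g ^ card (G i - \<Union>(G ` S)))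
           \<le> (1 - (1 - g) * (1 - real D / real (card A)) ^ card S) ^ D"
proof -
  let ?U = "pmf_of_set (subsets_of_card A D)"
  let ?\<gamma> = "1 - (1 - g) * (1 - real D / real (card A)) ^ card S"
  have fin_S: "finite S" using assms(5,7) finite_subset by blast
  have bounded: "\<bar>g ^ n\<bar> \<le> 1" for n using assms(3,4) by (simp add: power_le_one)
  have set_U: "set_pmf ?U = subsets_of_card A D"
    using assms(1,2) by (rule set_pmf_uniform_subset)
  have "measure_pmf.expectation (Pi_pmf I dflt (\<lambda>_. ?U)) (\<lambda>G. g ^ card (G i - \<Union>(G ` S)))
      = measure_pmf.expectation (Pi_pmf (insert i S) dflt (\<lambda>_. ?U)) (\<lambda>G. g ^ card (G i - \<Union>(G ` S)))"
    using assms(5-7) by (intro expectation_Pi_pmf_subset) auto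
  also have "\<dots> = measure_pmf.expectation ?U
      (\<lambda>y. measure_pmf.expectation (Pi_pmf S dflt (\<lambda>_. ?U)) (\<lambda>G. g ^ card (y - \<Union>(G ` S))))"
  proof -
    have "(G(i := y)) i - \<Union>((G(i := y)) ` S) = y - \<Union>(G ` S)" for G :: "'b \<Rightarrow> 'a set" and y
      using assms(8) by auto
    then show ?thesis
      by (subst expectation_Pi_pmf_insert[OF fin_S assms(8) bounded]) (simp only:)
  qed
  also have "\<dots> \<le> measure_pmf.expectation ?U (\<lambda>y. ?\<gamma> ^ card y)"
  proof (rule integral_mono_AE)
    show "AE y in measure_pmf ?U.
        measure_pmf.expectation (Pi_pmf S dflt (\<lambda>_. ?U)) (\<lambda>G. g ^ card (y - \<Union>(G ` S))) \<le> ?\<gamma> ^ card y"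
      using assms(1) finite_subset
      by (intro AE_pmfI expectation_Pi_uniform_subsets_pow_card_diff_Union[OF assms(1-4) fin_S])
         (auto simp: set_U)
  qed (auto simp: integrable_measure_pmf_finite set_U finite_subsets_of_card assms(1))
  also have "\<dots> = ?\<gamma> ^ D"
    by (subst integral_cong_AE[where g = "\<lambda>_. ?\<gamma> ^ D"]) (auto intro!: AE_pmfI simp: set_U)
  finally show ?thesis .
qed

section \<open>Noisy COMP with one-sided noise\<close>

lemma expectation_pow_card_displayed_negative:
  fixes \<mu> :: real
  assumes "finite T" "T \<subseteq> {0..<m}" "0 \<le> p" "p \<le> 1" "0 \<le> \<mu>"
  shows "measure_pmf.expectation (displayed_results m p 0 S G) (\<lambda>Dr. \<mu> ^ card {a \<in> T. \<not> Dr a})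
           = (p + (1 - p) * \<mu>) ^ card (T - \<Union>(G ` S))"
proof -
  let ?f = "\<lambda>a v. if a \<in> T then (if v then 1 else \<mu>) else 1"
  have restrict: "(\<Prod>a\<in>{0..<m}. if a \<in> T then h a else 1) = (\<Prod>a\<in>T. h a)" for h :: "nat \<Rightarrow> real"
    using prod.inter_restrict[of "{0..<m}" h T] assms(2) by (simp add: Int_absorb1)
  have "\<mu> ^ card {a \<in> T. \<not> Dr a} = (\<Prod>a\<in>{0..<m}. ?f a (Dr a))" for Dr :: "nat \<Rightarrow> bool"
    using pow_card_diff_eq_prod[OF assms(1), of \<mu> "{a. Dr a}"] by (simp add: restrict set_diff_eq)
  then have "measure_pmf.expectation (displayed_results m p 0 S G) (\<lambda>Dr. \<mu> ^ card {a \<in> T. \<not> Dr a})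
      = (\<Prod>a\<in>{0..<m}. measure_pmf.expectation
           (if truly_positive S G a then bernoulli_pmf (1 - 0) else bernoulli_pmf p) (?f a))"
    unfolding displayed_results_def
    by (simp only:) (rule expectation_prod_Pi_pmf, auto simp: assms(5) integrable_measure_pmf_finite)
  also have "\<dots> = (\<Prod>a\<in>{0..<m}. if a \<in> T then (if a \<in> \<Union>(G ` S) then 1 else p + (1 - p) * \<mu>) else 1)"
    using assms(3,4) by (intro prod.cong refl) (auto simp: truly_positive_def)
  also have "\<dots> = (p + (1 - p) * \<mu>) ^ card (T - \<Union>(G ` S))"
    by (simp only: restrict pow_card_diff_eq_prod[OF assms(1)])
  finally show ?thesis .
qed

lemma displayed_results_truly_positive:
  assumes "Dr \<in> set_pmf (displayed_results m p 0 S G)" "a < m" "truly_positive S G a"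
  shows "Dr a"
proof -
  have "Dr a \<in> set_pmf (bernoulli_pmf 1)"
    using assms unfolding displayed_results_def by (auto simp: set_Pi_pmf PiE_dflt_def)
  then show ?thesis by (cases "Dr a") (simp_all add: set_pmf_iff)
qed

lemma noisy_COMP_eq:
  assumes "S \<subseteq> {0..<n}" "0 < \<alpha> * real \<Delta>"
    and "\<And>i a. i \<in> S \<Longrightarrow> a \<in> G i \<Longrightarrow> Dr a"
    and "\<And>i. i \<in> {0..<n} - S \<Longrightarrow> \<alpha> * real \<Delta> \<le> real (card {a \<in> G i. \<not> Dr a})"
  shows "noisy_COMP n \<Delta> \<alpha> G Dr = S"
  unfolding noisy_COMP_def
proof (intro equalityI subsetI)
  fix i assume "i \<in> {i \<in> {0..<n}. \<not> \<alpha> * real \<Delta> \<le> real (card {a \<in> G i. \<not> Dr a})}"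
  then show "i \<in> S" using assms(4)[of i] by auto
next
  fix i assume "i \<in> S"
  moreover from this have no_negative: "{a \<in> G i. \<not> Dr a} = {}" using assms(3) by blast
  ultimately show "i \<in> {i \<in> {0..<n}. \<not> \<alpha> * real \<Delta> \<le> real (card {a \<in> G i. \<not> Dr a})}"
    using assms(1,2) by (auto simp: no_negative)
qed

lemma noisy_COMP_failure_witness:
  assumes "Dr \<in> set_pmf (displayed_results m p 0 S G)" "\<And>i. i < n \<Longrightarrow> G i \<subseteq> {0..<m}"
    and "S \<subseteq> {0..<n}" "0 < \<alpha> * real \<Delta>" "noisy_COMP n \<Delta> \<alpha> G Dr \<noteq> S"
  shows "\<exists>i\<in>{0..<n} - S. real (card {a \<in> G i. \<not> Dr a}) < \<alpha> * \<Delta>"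
proof (rule ccontr)
  assume "\<not> ?thesis"
  moreover have "Dr a" if "i \<in> S" "a \<in> G i" for i a
  proof -
    have "i < n" using assms(3) that(1) by auto
    then have "a \<in> {0..<m}" using assms(2) that(2) by blast
    then show ?thesis
      using displayed_results_truly_positive[OF assms(1)] that unfolding truly_positive_def by auto
  qed
  ultimately have "noisy_COMP n \<Delta> \<alpha> G Dr = S"
    using assms(3,4) by (intro noisy_COMP_eq) (auto simp: not_less)
  with assms(5) show False by simp
qed

lemma COMP_success_prob_eq:
  "COMP_success_prob n k m \<Delta> p q \<alpha> =
     measure_pmf.expectation (pmf_of_set (infected_sets n k)) (\<lambda>S.
       measure_pmf.expectation (constant_column_design n m \<Delta>) (\<lambda>G.
         measure_pmf.prob (displayed_results m p q S G) {Dr. noisy_COMP n \<Delta> \<alpha> G Dr = S}))"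
proof -
  have indicator_True: "measure_pmf.expectation M (\<lambda>x. indicator {True} (P x)) = measure_pmf.prob M {x. P x}"
    for M :: "'a pmf" and P
  proof -
    have "(\<lambda>x. indicator {True} (P x) :: real) = indicator {x. P x}"
      by (auto simp: indicator_def)
    then show ?thesis by simp
  qed
  show ?thesis
    unfolding COMP_success_prob_def measure_pmf_single pmf_bind by (simp add: indicator_True)
qed

lemma set_pmf_constant_column_design:
  assumes "G \<in> set_pmf (constant_column_design n m \<Delta>)" "\<Delta> \<le> m" "i < n"
  shows "G i \<subseteq> {0..<m}"
  using assms set_pmf_uniform_subset[of "{0..<m}" \<Delta>]
  unfolding constant_column_design_def by (auto simp: set_Pi_pmf PiE_dflt_def)

lemma prob_COMP_success_given_design:
  fixes \<mu> :: real
  assumes "\<And>i. i < n \<Longrightarrow> G i \<subseteq> {0..<m}" "S \<subseteq> {0..<n}" "0 < \<alpha> * real \<Delta>"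
    and "0 < \<mu>" "\<mu> < 1" "0 \<le> p" "p \<le> 1"
  shows "1 - (\<Sum>i\<in>{0..<n} - S. \<mu> powr (- (\<alpha> * \<Delta>)) * (p + (1 - p) * \<mu>) ^ card (G i - \<Union>(G ` S)))
           \<le> measure_pmf.prob (displayed_results m p 0 S G) {Dr. noisy_COMP n \<Delta> \<alpha> G Dr = S}"
proof -
  let ?M = "displayed_results m p 0 S G"
  let ?success = "{Dr. noisy_COMP n \<Delta> \<alpha> G Dr = S}"
  let ?X = "\<lambda>i Dr. \<mu> powr (- (\<alpha> * \<Delta>)) * \<mu> ^ card {a \<in> G i. \<not> Dr a}"
  have fin_M: "finite (set_pmf ?M)"
    unfolding displayed_results_def by (simp add: set_Pi_pmf finite_PiE_dflt)
  \<comment> \<open>Exponential Markov inequality: on failure, some term \<open>?X i Dr = \<mu> powr (N\<^sub>i - \<alpha>\<Delta>)\<close> is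
      at least \<open>1\<close>.\<close>
  have pointwise: "1 - (\<Sum>i\<in>{0..<n} - S. ?X i Dr) \<le> indicator ?success Dr"
    if "Dr \<in> set_pmf ?M" for Dr
  proof (cases "Dr \<in> ?success")
    case True
    have "0 \<le> (\<Sum>i\<in>{0..<n} - S. ?X i Dr)" using assms(4) by (intro sum_nonneg) auto
    with True show ?thesis by simp
  next
    case False
    then have "\<exists>i\<in>{0..<n} - S. real (card {a \<in> G i. \<not> Dr a}) < \<alpha> * \<Delta>"
      using noisy_COMP_failure_witness[OF that assms(1-3)] by simp
    then obtain i where i: "i \<in> {0..<n} - S" "real (card {a \<in> G i. \<not> Dr a}) < \<alpha> * \<Delta>" ..
    have "1 = \<mu> powr 0" using assms(4) by simp
    also have "\<dots> \<le> \<mu> powr (real (card {a \<in> G i. \<not> Dr a}) - \<alpha> * \<Delta>)"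
      using assms(4,5) i(2) by (intro powr_mono') auto
    also have "\<dots> = ?X i Dr"
      using assms(4) by (simp add: powr_diff powr_realpow powr_minus divide_inverse)
    also have "\<dots> \<le> (\<Sum>i\<in>{0..<n} - S. ?X i Dr)"
      using i(1) assms(4) by (intro member_le_sum) auto
    finally show ?thesis using False by simp
  qed
  have "1 - (\<Sum>i\<in>{0..<n} - S. \<mu> powr (- (\<alpha> * \<Delta>)) * (p + (1 - p) * \<mu>) ^ card (G i - \<Union>(G ` S)))
      = measure_pmf.expectation ?M (\<lambda>Dr. 1 - (\<Sum>i\<in>{0..<n} - S. ?X i Dr))"
  proof -
    have "measure_pmf.expectation ?M (\<lambda>Dr. \<mu> ^ card {a \<in> G i. \<not> Dr a})
        = (p + (1 - p) * \<mu>) ^ card (G i - \<Union>(G ` S))" if "i \<in> {0..<n} - S" for i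
      using assms(1,4,6,7) that finite_subset[OF assms(1)]
      by (intro expectation_pow_card_displayed_negative) auto
    then show ?thesis
      by (simp add: Bochner_Integration.integral_diff Bochner_Integration.integral_sum
          integrable_measure_pmf_finite fin_M)
  qed
  also have "\<dots> \<le> measure_pmf.expectation ?M (indicator ?success)"
    by (intro integral_mono_AE AE_pmfI pointwise) (auto simp: integrable_measure_pmf_finite fin_M)
  finally show ?thesis by simp
qed

lemma prob_COMP_success_given_infected:
  fixes \<mu> :: real
  assumes "\<Delta> \<le> m" "S \<subseteq> {0..<n}" "0 < \<alpha>" "1 \<le> \<Delta>"
    and "0 < \<mu>" "\<mu> < 1" "0 \<le> p" "p \<le> 1"
  shows "1 - real n * \<mu> powr (- (\<alpha> * \<Delta>)) *
             (1 - (1 - p) * (1 - \<mu>) * (1 - real \<Delta> / real m) ^ card S) ^ \<Delta>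
           \<le> measure_pmf.expectation (constant_column_design n m \<Delta>)
                (\<lambda>G. measure_pmf.prob (displayed_results m p 0 S G) {Dr. noisy_COMP n \<Delta> \<alpha> G Dr = S})"
proof -
  let ?design = "constant_column_design n m \<Delta>"
  let ?c = "\<mu> powr (- (\<alpha> * \<Delta>))"
  let ?g = "p + (1 - p) * \<mu>"
  let ?\<gamma> = "1 - (1 - p) * (1 - \<mu>) * (1 - real \<Delta> / real m) ^ card S"
  have "0 \<le> (1 - p) * \<mu>" "(1 - p) * \<mu> \<le> 1 - p"
    using assms(5-8) by (auto intro: mult_left_le)
  then have g: "0 \<le> ?g" "?g \<le> 1" "1 - ?g = (1 - p) * (1 - \<mu>)"
    using assms(7) by (auto simp: algebra_simps)
  have "real \<Delta> / real m \<le> 1"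
    using assms(1) by (cases "m = 0") (simp_all add: divide_le_eq_1)
  then have "0 \<le> (1 - real \<Delta> / real m) ^ card S" "(1 - real \<Delta> / real m) ^ card S \<le> 1"
    by (auto intro: power_le_one)
  moreover have "0 \<le> (1 - p) * (1 - \<mu>)" "(1 - p) * (1 - \<mu>) \<le> 1"
    using assms(5-8) by (auto intro: mult_le_one)
  ultimately have \<gamma>: "0 \<le> ?\<gamma>"
    by (metis diff_ge_0_iff_ge mult_le_one)
  have fin_design: "finite (set_pmf ?design)"
    unfolding constant_column_design_def
    by (simp add: set_Pi_pmf finite_PiE_dflt set_pmf_uniform_subset finite_subsets_of_card assms(1))
  have "1 - real n * (?c * ?\<gamma> ^ \<Delta>) \<le> 1 - (\<Sum>i\<in>{0..<n} - S. ?c * ?\<gamma> ^ \<Delta>)"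
    using card_mono[of "{0..<n}" "{0..<n} - S"] \<gamma> by (auto intro!: mult_right_mono)
  also have "\<dots> \<le> 1 - (\<Sum>i\<in>{0..<n} - S. ?c *
      measure_pmf.expectation ?design (\<lambda>G. ?g ^ card (G i - \<Union>(G ` S))))"
    using assms(1,2) g unfolding constant_column_design_def
    by (intro diff_left_mono sum_mono mult_left_mono)
       (auto intro!: order.trans[OF expectation_Pi_uniform_subsets_pow_card_component_diff_Union] simp: g(3))
  also have "\<dots> = measure_pmf.expectation ?design
      (\<lambda>G. 1 - (\<Sum>i\<in>{0..<n} - S. ?c * ?g ^ card (G i - \<Union>(G ` S))))"
    by (simp add: Bochner_Integration.integral_diff Bochner_Integration.integral_sum
        integrable_measure_pmf_finite fin_design)
  also have "\<dots> \<le> measure_pmf.expectation ?design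
      (\<lambda>G. measure_pmf.prob (displayed_results m p 0 S G) {Dr. noisy_COMP n \<Delta> \<alpha> G Dr = S})"
    using assms set_pmf_constant_column_design[OF _ assms(1)]
    by (intro integral_mono_AE AE_pmfI prob_COMP_success_given_design)
       (auto simp: integrable_measure_pmf_finite fin_design)
  finally show ?thesis by (simp add: mult_ac)
qed

lemma COMP_success_prob_ge:
  fixes \<mu> :: real
  assumes "\<Delta> \<le> m" "k \<le> n" "0 < \<alpha>" "1 \<le> \<Delta>"
    and "0 < \<mu>" "\<mu> < 1" "0 \<le> p" "p \<le> 1"
  shows "1 - real n * \<mu> powr (- (\<alpha> * \<Delta>)) *
             (1 - (1 - p) * (1 - \<mu>) * (1 - real \<Delta> / real m) ^ k) ^ \<Delta>
           \<le> COMP_success_prob n k m \<Delta> p 0 \<alpha>"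
proof -
  have fin: "finite (infected_sets n k)"
    unfolding infected_sets_def by (rule finite_subset[of _ "Pow {0..<n}"]) auto
  have "{0..<k} \<in> infected_sets n k" using assms(2) by (auto simp: infected_sets_def)
  then have nonempty: "infected_sets n k \<noteq> {}" by auto
  let ?bound = "1 - real n * \<mu> powr (- (\<alpha> * \<Delta>)) *
      (1 - (1 - p) * (1 - \<mu>) * (1 - real \<Delta> / real m) ^ k) ^ \<Delta>"
  have "?bound = measure_pmf.expectation (pmf_of_set (infected_sets n k)) (\<lambda>_. ?bound)"
    by simp
  also have "\<dots> \<le> measure_pmf.expectation (pmf_of_set (infected_sets n k)) (\<lambda>S.
       measure_pmf.expectation (constant_column_design n m \<Delta>) (\<lambda>G.
         measure_pmf.prob (displayed_results m p 0 S G) {Dr. noisy_COMP n \<Delta> \<alpha> G Dr = S}))"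
  proof (rule integral_mono_AE)
    show "AE S in measure_pmf (pmf_of_set (infected_sets n k)). ?bound \<le>
        measure_pmf.expectation (constant_column_design n m \<Delta>) (\<lambda>G.
          measure_pmf.prob (displayed_results m p 0 S G) {Dr. noisy_COMP n \<Delta> \<alpha> G Dr = S})"
    proof (rule AE_pmfI)
      fix S assume "S \<in> set_pmf (pmf_of_set (infected_sets n k))"
      then have S: "S \<subseteq> {0..<n}" "card S = k"
        using fin nonempty by (auto simp: infected_sets_def)
      then show "?bound \<le> measure_pmf.expectation (constant_column_design n m \<Delta>) (\<lambda>G.
          measure_pmf.prob (displayed_results m p 0 S G) {Dr. noisy_COMP n \<Delta> \<alpha> G Dr = S})"
        using prob_COMP_success_given_infected[OF assms(1) S(1) assms(3-8)] S(2) by simp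
    qed
  qed (use fin nonempty in \<open>auto simp: integrable_measure_pmf_finite\<close>)
  finally show ?thesis
    unfolding COMP_success_prob_eq .
qed

section \<open>Asymptotics\<close>

lemma one_minus_pow_le_exp:
  fixes x :: real
  assumes "x \<le> 1"
  shows "(1 - x) ^ k \<le> exp (- (real k * x))"
proof -
  have "(1 - x) ^ k \<le> exp (- x) ^ k"
    using assms exp_ge_add_one_self[of "- x"] by (intro power_mono) auto
  then show ?thesis by (simp add: exp_of_nat_mult[symmetric])
qed

lemma exp_le_one_minus_pow:
  fixes x :: real
  assumes "0 \<le> x" "x < 1"
  shows "exp (- (real k * x / (1 - x))) \<le> (1 - x) ^ k"
proof -
  \<comment> \<open>\<open>ln y \<le> y - 1\<close> at \<open>y = 1 / (1 - x)\<close>\<close>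
  have "- ln (1 - x) \<le> x / (1 - x)"
    using ln_le_minus_one[of "1 / (1 - x)"] assms by (simp add: ln_div field_simps)
  then have "real k * (- ln (1 - x)) \<le> real k * (x / (1 - x))"
    by (rule mult_left_mono) simp
  then have "- (real k * x / (1 - x)) \<le> real k * ln (1 - x)"
    by simp
  then have "exp (- (real k * x / (1 - x))) \<le> exp (real k * ln (1 - x))"
    by simp
  also have "\<dots> = (1 - x) ^ k"
    using assms by (simp add: exp_of_nat_mult)
  finally show ?thesis .
qed

lemma tendsto_one_minus_pow:
  fixes x :: "'a \<Rightarrow> real" and k :: "'a \<Rightarrow> nat"
  assumes "(x \<longlongrightarrow> 0) F" "((\<lambda>n. real (k n) * x n) \<longlongrightarrow> d) F" "eventually (\<lambda>n. 0 \<le> x n) F"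
  shows "((\<lambda>n. (1 - x n) ^ k n) \<longlongrightarrow> exp (- d)) F"
proof (rule tendsto_sandwich)
  have "eventually (\<lambda>n. x n < 1) F"
    using assms(1) by (rule order_tendstoD) simp
  with assms(3) show "eventually (\<lambda>n. exp (- (real (k n) * x n / (1 - x n))) \<le> (1 - x n) ^ k n) F"
    by eventually_elim (rule exp_le_one_minus_pow)
  from \<open>eventually (\<lambda>n. x n < 1) F\<close> show "eventually (\<lambda>n. (1 - x n) ^ k n \<le> exp (- (real (k n) * x n))) F"
    by eventually_elim (simp add: one_minus_pow_le_exp)
  have "((\<lambda>n. real (k n) * x n / (1 - x n)) \<longlongrightarrow> d / (1 - 0)) F"
    using assms(1,2) by (intro tendsto_divide tendsto_diff tendsto_const) auto
  then show "((\<lambda>n. exp (- (real (k n) * x n / (1 - x n)))) \<longlongrightarrow> exp (- d)) F"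
    by (intro tendsto_exp tendsto_minus) simp
  show "((\<lambda>n. exp (- (real (k n) * x n))) \<longlongrightarrow> exp (- d)) F"
    using assms(2) by (intro tendsto_intros)
qed

lemma mult_exp_mult_pow_eq_exp:
  fixes y \<delta> :: real
  assumes "1 < n" "0 < y"
  shows "real n * exp (\<delta> * \<Delta>) * y ^ \<Delta> = exp ((1 - real \<Delta> / ln (real n) * (- ln y - \<delta>)) * ln (real n))"
proof -
  have "0 < ln (real n)" using assms(1) by simp
  then have "(1 - real \<Delta> / ln (real n) * (- ln y - \<delta>)) * ln (real n) = ln (real n) + \<delta> * \<Delta> + real \<Delta> * ln y"
    by (simp add: field_simps)
  then show ?thesis
    using assms by (simp add: exp_add exp_of_nat_mult)
qed

lemma failure_bound_tendsto_zero:
  fixes \<Delta> m k :: "nat \<Rightarrow> nat" and a d \<delta> \<kappa> :: real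
  assumes "0 \<le> a" "a < 1"
    and ratio: "(\<lambda>n. real (\<Delta> n) / real (m n)) \<longlonglongrightarrow> 0"
    and k_ratio: "(\<lambda>n. real (k n) * (real (\<Delta> n) / real (m n))) \<longlonglongrightarrow> d"
    and \<Delta>_ln: "(\<lambda>n. real (\<Delta> n) / ln (real n)) \<longlonglongrightarrow> \<kappa>"
    and rate: "1 < \<kappa> * (- ln (1 - a * exp (- d)) - \<delta>)"
  shows "(\<lambda>n. real n * exp (\<delta> * \<Delta> n) * (1 - a * (1 - real (\<Delta> n) / real (m n)) ^ k n) ^ \<Delta> n)
           \<longlonglongrightarrow> 0"
proof -
  define \<rho> where "\<rho> n = (1 - real (\<Delta> n) / real (m n)) ^ k n" for n
  define B where "B n = - ln (1 - a * \<rho> n) - \<delta>" for n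
  have "\<rho> \<longlonglongrightarrow> exp (- d)"
    unfolding \<rho>_def using ratio k_ratio by (rule tendsto_one_minus_pow) simp
  moreover have "1 - a * exp (- d) \<noteq> 0"
  proof -
    have "0 \<le> d"
      using k_ratio by (rule tendsto_lowerbound) simp_all
    then have "a * exp (- d) \<le> a"
      using assms(1) by (intro mult_left_le) simp_all
    then show ?thesis using assms(2) by simp
  qed
  ultimately have "B \<longlonglongrightarrow> - ln (1 - a * exp (- d)) - \<delta>"
    unfolding B_def by (intro tendsto_diff tendsto_minus tendsto_ln tendsto_mult tendsto_const)
  then have "(\<lambda>n. 1 - real (\<Delta> n) / ln (real n) * B n)
      \<longlonglongrightarrow> 1 - \<kappa> * (- ln (1 - a * exp (- d)) - \<delta>)"
    using \<Delta>_ln by (intro tendsto_intros)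
  then have "filterlim (\<lambda>n. (1 - real (\<Delta> n) / ln (real n) * B n) * ln (real n)) at_bot sequentially"
    using rate by (intro filterlim_tendsto_neg_mult_at_bot
        filterlim_compose[OF ln_at_top filterlim_real_sequentially]) auto
  then have "(\<lambda>n. exp ((1 - real (\<Delta> n) / ln (real n) * B n) * ln (real n))) \<longlonglongrightarrow> 0"
    by (rule filterlim_compose[OF exp_at_bot])
  moreover have "eventually (\<lambda>n. exp ((1 - real (\<Delta> n) / ln (real n) * B n) * ln (real n))
      = real n * exp (\<delta> * \<Delta> n) * (1 - a * \<rho> n) ^ \<Delta> n) sequentially"
  proof -
    have "eventually (\<lambda>n. real (\<Delta> n) / real (m n) < 1) sequentially"
      using ratio by (rule order_tendstoD) simp
    then show ?thesis
      using eventually_gt_at_top[of 1]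
    proof eventually_elim
      case (elim n)
      have "0 \<le> \<rho> n" "\<rho> n \<le> 1"
        using elim(1) unfolding \<rho>_def by (auto intro: power_le_one)
      then have "a * \<rho> n \<le> a"
        using assms(1) by (intro mult_left_le)
      then have "0 < 1 - a * \<rho> n"
        using assms(2) by simp
      from mult_exp_mult_pow_eq_exp[OF elim(2) this, of \<delta> "\<Delta> n"] show ?case
        unfolding B_def by (rule sym)
    qed
  qed
  ultimately show ?thesis
    unfolding \<rho>_def by (rule Lim_transform_eventually)
qed

lemma tendsto_nat_ceiling_div_self:
  fixes f :: "'a \<Rightarrow> real"
  assumes "filterlim f at_top F"
  shows "((\<lambda>x. real (nat \<lceil>f x\<rceil>) / f x) \<longlongrightarrow> 1) F"
proof (rule tendsto_sandwich)
  have ev: "eventually (\<lambda>x. 1 \<le> f x) F"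
    using assms by (simp add: filterlim_at_top)
  then show "eventually (\<lambda>x. 1 \<le> real (nat \<lceil>f x\<rceil>) / f x) F"
    by eventually_elim (simp add: le_divide_eq_1)
  from ev show "eventually (\<lambda>x. real (nat \<lceil>f x\<rceil>) / f x \<le> 1 + inverse (f x)) F"
  proof eventually_elim
    case (elim x)
    have "real (nat \<lceil>f x\<rceil>) \<le> f x + 1"
      using elim by linarith
    then show ?case
      using elim by (simp add: divide_simps)
  qed
  show "((\<lambda>x. 1 + inverse (f x)) \<longlongrightarrow> 1) F"
    using tendsto_add[OF tendsto_const tendsto_inverse_0_at_top[OF assms], of 1] by simp
qed simp

lemma filterlim_at_top_if_asymp_powr:
  fixes k :: "nat \<Rightarrow> nat" and \<theta> :: real
  assumes "0 < \<theta>" "(\<lambda>n. real (k n) / real n powr \<theta>) \<longlonglongrightarrow> 1"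
  shows "filterlim (\<lambda>n. real (k n)) at_top sequentially"
proof -
  have "filterlim (\<lambda>n. exp (\<theta> * ln (real n))) at_top sequentially"
    using assms(1) by (intro filterlim_compose[OF exp_at_top] filterlim_tendsto_pos_mult_at_top[OF tendsto_const]
        filterlim_compose[OF ln_at_top filterlim_real_sequentially])
  then have "filterlim (\<lambda>n. real (k n) / real n powr \<theta> * exp (\<theta> * ln (real n))) at_top sequentially"
    by (rule filterlim_tendsto_pos_mult_at_top[OF assms(2) zero_less_one])
  moreover have "eventually (\<lambda>n. real (k n) / real n powr \<theta> * exp (\<theta> * ln (real n)) = real (k n)) sequentially"
    using eventually_gt_at_top[of 0] by eventually_elim (simp add: powr_def)
  ultimately show ?thesis
    by (rule filterlim_cong[OF refl refl, THEN iffD1, rotated])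
qed

lemma tendsto_ln_ratio_div_ln:
  fixes k :: "nat \<Rightarrow> nat" and \<theta> :: real
  assumes "(\<lambda>n. real (k n) / real n powr \<theta>) \<longlonglongrightarrow> 1"
  shows "(\<lambda>n. ln (real n / real (k n)) / ln (real n)) \<longlonglongrightarrow> 1 - \<theta>"
proof -
  let ?r = "\<lambda>n. real (k n) / real n powr \<theta>"
  have "(\<lambda>n. ln (?r n)) \<longlonglongrightarrow> ln 1"
    using assms by (intro tendsto_ln) simp_all
  then have "(\<lambda>n. ln (?r n) / ln (real n)) \<longlonglongrightarrow> 0"
    by (intro tendsto_divide_0 filterlim_at_top_imp_at_infinity
        filterlim_compose[OF ln_at_top filterlim_real_sequentially])
  then have "(\<lambda>n. (1 - \<theta>) - ln (?r n) / ln (real n)) \<longlonglongrightarrow> (1 - \<theta>) - 0"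
    by (intro tendsto_intros)
  moreover have "eventually (\<lambda>n. (1 - \<theta>) - ln (?r n) / ln (real n)
      = ln (real n / real (k n)) / ln (real n)) sequentially"
  proof -
    have "eventually (\<lambda>n. 0 < ?r n) sequentially"
      using assms by (rule order_tendstoD) simp
    then show ?thesis
      using eventually_gt_at_top[of 1]
    proof eventually_elim
      case (elim n)
      then have "0 < real (k n)" "0 < ln (real n)"
        by (auto simp: zero_less_divide_iff)
      then show ?case
        using elim by (simp add: ln_div ln_powr field_simps)
    qed
  qed
  ultimately show ?thesis
    by (simp add: Lim_transform_eventually)
qed

lemma filterlim_at_top_if_div_ln_tendsto:
  fixes L :: "nat \<Rightarrow> real"
  assumes "(\<lambda>n. L n / ln (real n)) \<longlonglongrightarrow> \<beta>" "0 < \<beta>"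
  shows "filterlim L at_top sequentially"
proof -
  have "filterlim (\<lambda>n. L n / ln (real n) * ln (real n)) at_top sequentially"
    using assms by (intro filterlim_tendsto_pos_mult_at_top
        filterlim_compose[OF ln_at_top filterlim_real_sequentially])
  moreover have "eventually (\<lambda>n. L n / ln (real n) * ln (real n) = L n) sequentially"
    using eventually_gt_at_top[of 1] by eventually_elim simp
  ultimately show ?thesis
    by (rule filterlim_cong[OF refl refl, THEN iffD1, rotated])
qed

lemma nat_ceiling_design_sizes:
  assumes "0 < c" "0 < d" "0 < L" "d \<le> real k"
  shows "1 \<le> nat \<lceil>c * d * L\<rceil>" "nat \<lceil>c * d * L\<rceil> \<le> nat \<lceil>c * real k * L\<rceil>"
proof -
  have "0 < c * d * L" "c * d * L \<le> c * real k * L"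
    using assms by (auto intro: mult_right_mono)
  then show "1 \<le> nat \<lceil>c * d * L\<rceil>" "nat \<lceil>c * d * L\<rceil> \<le> nat \<lceil>c * real k * L\<rceil>"
    by (simp add: Suc_le_eq, intro nat_mono ceiling_mono)
qed

lemma design_size_asymptotics:
  fixes k \<Delta> m :: "nat \<Rightarrow> nat" and L :: "nat \<Rightarrow> real" and c d \<beta> :: real
  assumes "0 < c" "0 < d" "0 < \<beta>"
    and k: "filterlim (\<lambda>n. real (k n)) at_top sequentially"
    and L: "(\<lambda>n. L n / ln (real n)) \<longlonglongrightarrow> \<beta>"
    and \<Delta>_def: "\<And>n. \<Delta> n = nat \<lceil>c * d * L n\<rceil>"
    and m_def: "\<And>n. m n = nat \<lceil>c * real (k n) * L n\<rceil>"
  shows "(\<lambda>n. real (\<Delta> n) / ln (real n)) \<longlonglongrightarrow> c * d * \<beta>"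
    and "(\<lambda>n. real (k n) * (real (\<Delta> n) / real (m n))) \<longlonglongrightarrow> d"
    and "(\<lambda>n. real (\<Delta> n) / real (m n)) \<longlonglongrightarrow> 0"
    and "eventually (\<lambda>n. 0 < L n \<and> 1 \<le> \<Delta> n \<and> \<Delta> n \<le> m n) sequentially"
proof -
  have L_top: "filterlim L at_top sequentially"
    using L assms(3) by (rule filterlim_at_top_if_div_ln_tendsto)
  have cdL: "filterlim (\<lambda>n. c * d * L n) at_top sequentially"
    using assms(1,2) by (intro filterlim_tendsto_pos_mult_at_top[OF tendsto_const _ L_top]) simp
  have ckL: "filterlim (\<lambda>n. c * real (k n) * L n) at_top sequentially"
    unfolding mult.assoc using assms(1)
    by (intro filterlim_tendsto_pos_mult_at_top[OF tendsto_const _ filterlim_at_top_mult_at_top[OF k L_top]])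
  have R\<Delta>: "(\<lambda>n. real (\<Delta> n) / (c * d * L n)) \<longlonglongrightarrow> 1"
    unfolding \<Delta>_def by (rule tendsto_nat_ceiling_div_self[OF cdL])
  have Rm: "(\<lambda>n. real (m n) / (c * real (k n) * L n)) \<longlonglongrightarrow> 1"
    unfolding m_def by (rule tendsto_nat_ceiling_div_self[OF ckL])
  have "eventually (\<lambda>n. 0 < L n) sequentially"
    using L_top by (simp add: filterlim_at_top_dense)
  moreover have "eventually (\<lambda>n. d \<le> real (k n)) sequentially"
    using k by (simp add: filterlim_at_top)
  ultimately have ev: "eventually (\<lambda>n. 0 < L n \<and> d \<le> real (k n)) sequentially"
    by (rule eventually_conj)
  have ev_m: "eventually (\<lambda>n. 0 < real (m n)) sequentially"
    using Rm by (rule order_tendstoD(1)[of _ 1 _ 0, THEN eventually_mono]) (auto simp: zero_less_divide_iff)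
  show "(\<lambda>n. real (\<Delta> n) / ln (real n)) \<longlonglongrightarrow> c * d * \<beta>"
  proof (rule Lim_transform_eventually)
    show "(\<lambda>n. real (\<Delta> n) / (c * d * L n) * (c * d) * (L n / ln (real n))) \<longlonglongrightarrow> c * d * \<beta>"
      using tendsto_mult[OF tendsto_mult[OF R\<Delta> tendsto_const] L] by (simp only: mult_1_left)
    show "eventually (\<lambda>n. real (\<Delta> n) / (c * d * L n) * (c * d) * (L n / ln (real n))
        = real (\<Delta> n) / ln (real n)) sequentially"
      using ev by eventually_elim (use assms(1,2) in simp)
  qed
  have k\<Delta>m: "(\<lambda>n. real (k n) * (real (\<Delta> n) / real (m n))) \<longlonglongrightarrow> d"
  proof (rule Lim_transform_eventually)
    show "(\<lambda>n. d * (real (\<Delta> n) / (c * d * L n)) / (real (m n) / (c * real (k n) * L n))) \<longlonglongrightarrow> d"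
      using tendsto_divide[OF tendsto_mult[OF tendsto_const R\<Delta>] Rm] by (simp only: mult_1_right div_by_1)
    show "eventually (\<lambda>n. d * (real (\<Delta> n) / (c * d * L n)) / (real (m n) / (c * real (k n) * L n))
        = real (k n) * (real (\<Delta> n) / real (m n))) sequentially"
      using ev ev_m by eventually_elim (use assms(1,2) in \<open>auto simp: field_simps\<close>)
  qed
  then show "(\<lambda>n. real (k n) * (real (\<Delta> n) / real (m n))) \<longlonglongrightarrow> d" .
  show "(\<lambda>n. real (\<Delta> n) / real (m n)) \<longlonglongrightarrow> 0"
  proof (rule Lim_transform_eventually)
    show "(\<lambda>n. real (k n) * (real (\<Delta> n) / real (m n)) * inverse (real (k n))) \<longlonglongrightarrow> 0"
      using tendsto_mult[OF k\<Delta>m tendsto_inverse_0_at_top[OF k]] by simp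
    show "eventually (\<lambda>n. real (k n) * (real (\<Delta> n) / real (m n)) * inverse (real (k n))
        = real (\<Delta> n) / real (m n)) sequentially"
      using ev by eventually_elim (use assms(2) in simp)
  qed
  show "eventually (\<lambda>n. 0 < L n \<and> 1 \<le> \<Delta> n \<and> \<Delta> n \<le> m n) sequentially"
    using ev
  proof eventually_elim
    case (elim n)
    then show ?case
      unfolding \<Delta>_def m_def using nat_ceiling_design_sizes[OF assms(1,2), of "L n" "k n"] by simp
  qed
qed

lemma le_if_ln_div_pos:
  assumes "0 < ln (real n / real k)"
  shows "k \<le> n"
proof -
  have "real n / real k \<noteq> 0"
  proof
    assume "real n / real k = 0"
    with assms show False by simp
  qed
  then have pos: "0 < real n" "0 < real k"
    by auto
  then have "1 < real n / real k"
    using assms by (simp add: ln_gt_zero_iff)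
  then show ?thesis
    using pos by (simp add: less_divide_eq_1_pos)
qed

lemma exists_less_if_INF_less:
  fixes f :: "'a \<Rightarrow> real"
  assumes "X \<noteq> {}" "\<And>x. x \<in> X \<Longrightarrow> 0 \<le> f x" "0 \<le> \<epsilon>" "(1 + \<epsilon>) * (INF x\<in>X. f x) < b"
  shows "\<exists>x\<in>X. f x < b"
proof -
  have "0 \<le> (INF x\<in>X. f x)"
    using assms(1,2) by (rule cINF_greatest)
  then have "(INF x\<in>X. f x) \<le> (1 + \<epsilon>) * (INF x\<in>X. f x)"
    using assms(3) by (simp add: distrib_right)
  then have "(INF x\<in>X. f x) < b"
    using assms(4) by linarith
  then show ?thesis
    using cInf_lessD[of "f ` X" b] assms(1) by blast
qed

lemma exists_perturbation_above_one:
  fixes b \<kappa> :: real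
  assumes "0 \<le> b" "b < 1" "1 < \<kappa> * - ln (1 - b)"
  shows "\<exists>\<delta>. 0 < \<delta> \<and> \<delta> < 1 \<and> 1 < \<kappa> * (- ln (1 - (1 - \<delta>) * b) - \<delta>)"
proof -
  let ?h = "\<lambda>\<delta>. \<kappa> * (- ln (1 - (1 - \<delta>) * b) - \<delta>)"
  have "(?h \<longlongrightarrow> \<kappa> * (- ln (1 - (1 - 0) * b) - 0)) (at_right 0)"
    using assms(2) by (intro tendsto_intros) auto
  then have "eventually (\<lambda>\<delta>. 1 < ?h \<delta>) (at_right 0)"
    using assms(3) by (intro order_tendstoD(1)) auto
  moreover have "eventually (\<lambda>\<delta>. \<delta> \<in> {0<..<1}) (at_right (0::real))"
    by (rule eventually_at_right_real) simp
  ultimately have "eventually (\<lambda>\<delta>. 1 < ?h \<delta> \<and> \<delta> \<in> {0<..<1}) (at_right (0::real))"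
    by (rule eventually_conj)
  then obtain \<delta> where "1 < ?h \<delta>" "\<delta> \<in> {0<..<1}"
    using eventually_happens'[OF trivial_limit_at_right_real] by blast
  then show ?thesis by auto
qed

lemma COMP_success_prob_ge_exp:
  assumes "\<Delta> \<le> m" "k \<le> n" "1 \<le> \<Delta>" "0 < \<delta>" "\<delta> < 1" "0 \<le> p" "p \<le> 1"
  shows "1 - real n * exp (\<delta> * \<Delta>) * (1 - (1 - p) * (1 - \<delta>) * (1 - real \<Delta> / real m) ^ k) ^ \<Delta>
           \<le> COMP_success_prob n k m \<Delta> p 0 (\<delta> / - ln \<delta>)"
proof -
  have "ln \<delta> < 0" using assms(4,5) by simp
  then have "0 < \<delta> / - ln \<delta>"
    using assms(4) by (intro divide_pos_pos) simp_all
  moreover have "\<delta> powr (- (\<delta> / - ln \<delta> * \<Delta>)) = exp (\<delta> * \<Delta>)"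
    using \<open>ln \<delta> < 0\<close> assms(4) by (simp add: powr_def)
  ultimately show ?thesis
    using COMP_success_prob_ge[OF assms(1,2) _ assms(3-7), of "\<delta> / - ln \<delta>"] by simp
qed

lemma exp_neg_mult_bounds:
  fixes d p :: real
  assumes "0 < d" "0 \<le> p" "p < 1"
  shows "0 < exp (- d) * (1 - p)" "exp (- d) * (1 - p) < 1"
proof -
  have "exp (- d) * (1 - p) \<le> exp (- d)"
    using assms(2,3) by (intro mult_right_le_one_le) simp_all
  moreover have "exp (- d) < 1"
    using assms(1) by simp
  ultimately show "exp (- d) * (1 - p) < 1"
    by linarith
  show "0 < exp (- d) * (1 - p)"
    using assms(3) by simp
qed

lemma exists_COMP_parameters:
  fixes p \<theta> \<epsilon> c :: real
  assumes "0 \<le> p" "p < 1" "\<theta> < 1" "0 \<le> \<epsilon>"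
    and "(1 + \<epsilon>) * (1 / (1 - \<theta>)) * (INF d\<in>{0<..}. 1 / (- d * ln (1 - exp (- d) * (1 - p)))) < c"
  obtains d \<delta> where "0 < c" "0 < d" "0 < \<delta>" "\<delta> < 1"
    and "1 < c * d * (1 - \<theta>) * (- ln (1 - (1 - \<delta>) * (exp (- d) * (1 - p))) - \<delta>)"
proof -
  let ?rate = "\<lambda>d. - d * ln (1 - exp (- d) * (1 - p))"
  have rate_pos: "0 < ?rate d" if "0 < d" for d
    using exp_neg_mult_bounds[OF that assms(1,2)] that by (simp add: mult_pos_neg)
  have INF_less: "(1 + \<epsilon>) * (INF d\<in>{0<..}. 1 / ?rate d) < c * (1 - \<theta>)"
    using assms(3,5) by (simp add: field_simps)
  have nonneg: "0 \<le> 1 / ?rate x" if "x \<in> {0<..}" for x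
    using rate_pos[of x] that by simp
  have "(1::real) \<in> {0<..}" by simp
  then obtain d where "d \<in> {0<..}" and "1 / ?rate d < c * (1 - \<theta>)"
    using exists_less_if_INF_less[OF _ nonneg assms(4) INF_less] by blast
  then have "0 < d" "1 / ?rate d < c * (1 - \<theta>)" by simp_all
  then have rate_d: "1 < c * (1 - \<theta>) * ?rate d"
    using rate_pos[OF \<open>0 < d\<close>] by (simp only: pos_divide_less_eq)
  then have "0 < c * (1 - \<theta>) * ?rate d"
    by linarith
  then have "0 < c * (1 - \<theta>)"
    using rate_pos[OF \<open>0 < d\<close>] by (rule zero_less_mult_pos2)
  then have "0 < c"
    using zero_less_mult_pos2[of c "1 - \<theta>"] assms(3) by simp
  moreover obtain \<delta> where "0 < \<delta>" "\<delta> < 1"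
    "1 < c * d * (1 - \<theta>) * (- ln (1 - (1 - \<delta>) * (exp (- d) * (1 - p))) - \<delta>)"
  proof (rule exists_perturbation_above_one[of "exp (- d) * (1 - p)" "c * d * (1 - \<theta>)", THEN exE])
    show "0 \<le> exp (- d) * (1 - p)" "exp (- d) * (1 - p) < 1"
      using exp_neg_mult_bounds[OF \<open>0 < d\<close> assms(1,2)] by simp_all
    show "1 < c * d * (1 - \<theta>) * - ln (1 - exp (- d) * (1 - p))"
      using rate_d by (simp add: mult_ac)
  qed (use that in blast)
  ultimately show ?thesis
    using that \<open>0 < d\<close> by blast
qed

lemma COMP_success_prob_tendsto_one:
  fixes k \<Delta> m :: "nat \<Rightarrow> nat" and p \<delta> d \<kappa> :: real
  assumes "0 \<le> p" "p \<le> 1" "0 < \<delta>" "\<delta> < 1"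
    and "(\<lambda>n. real (\<Delta> n) / real (m n)) \<longlonglongrightarrow> 0"
    and "(\<lambda>n. real (k n) * (real (\<Delta> n) / real (m n))) \<longlonglongrightarrow> d"
    and "(\<lambda>n. real (\<Delta> n) / ln (real n)) \<longlonglongrightarrow> \<kappa>"
    and admissible: "eventually (\<lambda>n. 1 \<le> \<Delta> n \<and> \<Delta> n \<le> m n \<and> k n \<le> n) sequentially"
    and "1 < \<kappa> * (- ln (1 - (1 - p) * (1 - \<delta>) * exp (- d)) - \<delta>)"
  shows "(\<lambda>n. COMP_success_prob n (k n) (m n) (\<Delta> n) p 0 (\<delta> / - ln \<delta>)) \<longlonglongrightarrow> 1"
proof -
  define err where "err n = real n * exp (\<delta> * \<Delta> n) *
      (1 - (1 - p) * (1 - \<delta>) * (1 - real (\<Delta> n) / real (m n)) ^ k n) ^ \<Delta> n" for n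
  have "(1 - p) * (1 - \<delta>) \<le> 1 - \<delta>"
    using assms(1-4) by (intro mult_left_le_one_le) simp_all
  then have a: "0 \<le> (1 - p) * (1 - \<delta>)" "(1 - p) * (1 - \<delta>) < 1"
    using assms(2-4) by (simp, linarith)
  have "err \<longlonglongrightarrow> 0"
    unfolding err_def by (rule failure_bound_tendsto_zero[OF a assms(5-7,9)])
  from tendsto_diff[OF tendsto_const this] have lim: "(\<lambda>n. 1 - err n) \<longlonglongrightarrow> 1"
    by simp
  have lower: "eventually (\<lambda>n. 1 - err n \<le> COMP_success_prob n (k n) (m n) (\<Delta> n) p 0 (\<delta> / - ln \<delta>))
      sequentially"
    using admissible
  proof eventually_elim
    case (elim n)
    then show ?case
      unfolding err_def using assms(1-4) by (intro COMP_success_prob_ge_exp) auto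
  qed
  have upper: "eventually (\<lambda>n. COMP_success_prob n (k n) (m n) (\<Delta> n) p 0 (\<delta> / - ln \<delta>) \<le> 1)
      sequentially"
    unfolding COMP_success_prob_def by simp
  show ?thesis
    by (rule tendsto_sandwich[OF lower upper lim tendsto_const])
qed

theorem corollary2p9:
  fixes p \<theta> \<epsilon> c :: real and k :: "nat \<Rightarrow> nat"
  assumes "0 < p" "p < 1" "0 < \<theta>" "\<theta> < 1" "\<epsilon> > 0"
    and "(\<lambda>n. real (k n) / real n powr \<theta>) \<longlonglongrightarrow> 1"
    and "c > (1 + \<epsilon>) * (1 / (1 - \<theta>)) *
               (INF d\<in>{0<..}. 1 / (- d * ln (1 - exp (- d) * (1 - p))))"
  shows "\<exists>d>0. \<exists>\<alpha>::real.
           (\<lambda>n. COMP_success_prob n (k n)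
                   (nat \<lceil>c * real (k n) * ln (real n / real (k n))\<rceil>)
                   (nat \<lceil>c * d * ln (real n / real (k n))\<rceil>) p 0 \<alpha>) \<longlonglongrightarrow> 1"
proof -
  obtain d \<delta> where c: "0 < c" and d: "0 < d" and \<delta>: "0 < \<delta>" "\<delta> < 1"
    and rate: "1 < c * d * (1 - \<theta>) * (- ln (1 - (1 - \<delta>) * (exp (- d) * (1 - p))) - \<delta>)"
    using exists_COMP_parameters[of p \<theta> \<epsilon> c] assms by auto
  define L where "L n = ln (real n / real (k n))" for n
  define \<Delta> where "\<Delta> n = nat \<lceil>c * d * L n\<rceil>" for n
  define m where "m n = nat \<lceil>c * real (k n) * L n\<rceil>" for n
  have "0 < 1 - \<theta>" using assms(4) by simp
  note design = design_size_asymptotics[OF c d this filterlim_at_top_if_asymp_powr[OF assms(3,6)]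
      tendsto_ln_ratio_div_ln[OF assms(6), folded L_def] \<Delta>_def m_def]
  have "eventually (\<lambda>n. 1 \<le> \<Delta> n \<and> \<Delta> n \<le> m n \<and> k n \<le> n) sequentially"
    using design(4) by eventually_elim (auto simp: L_def intro: le_if_ln_div_pos)
  then have "(\<lambda>n. COMP_success_prob n (k n) (m n) (\<Delta> n) p 0 (\<delta> / - ln \<delta>)) \<longlonglongrightarrow> 1"
    using assms(1,2) \<delta> rate
    by (intro COMP_success_prob_tendsto_one[OF _ _ _ _ design(3,2,1)]) (simp_all add: mult_ac)
  then show ?thesis
    unfolding m_def \<Delta>_def L_def using d by blast
qed

end
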